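(* Let $X$ be a finite set with $|X|=n$, $0\notin X$, $W=X\cup\{0\}$. Let $\mathfrak{V}$ be a $\big(\binom{n}{2}_{\,n-2}\ \binom{n}{3}_{\,3}\big)$-configuration whose point set is $\mathcal{P}_2(X)$, and let $\mathfrak{M}$ be the structure with point set $\mathcal{P}_2(W)$ whose lines are the lines of $\mathfrak{V}$ together with all sets $\{\{0,x\},\{0,y\},\{x,y\}\}$ for distinct $x,y\in X$. Let $H$ be a hyperplane of $\mathfrak{M}$, and on $X$ define $x\sim y$ iff $x=y$, or $x\neq y$ and $\{x,y\}\in H$ (an equivalence relation). Let $x\in X$. If there is $z\in[x]_\sim$ with $\{0,z\}\in H$, then $\{0,y\}\in H$ for every $y\in[x]_\sim$.
   Context: $\mathcal{P}_2(Y)$ denotes the set of $2$-element subsets of $Y$; $[x]_\sim$ is the equivalence class of $x$. A $(v_r\ b_k)$-configuration is a partial linear space with $v$ points and $b$ lines, each point on exactly $r$ lines and each line containing exactly $k$ points. A subspace is a set of points containing every line that meets it in at least two points; a hyperplane is a proper subspace meeting every line. (A point $x\in X$ of the original description is identified with the point $\{0,x\}$.) *)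

theory Defs
  imports Main
begin

definition P2 :: "'a set \<Rightarrow> 'a set set" where
  "P2 Y = {e. e \<subseteq> Y \<and> card e = 2}"

definition partial_linear_space :: "'p set \<Rightarrow> 'p set set \<Rightarrow> bool" where
  "partial_linear_space P L \<longleftrightarrow>
     (\<forall>l\<in>L. l \<subseteq> P \<and> finite l \<and> card l \<ge> 2) \<and>
     (\<forall>p\<in>P. \<forall>q\<in>P. p \<noteq> q \<longrightarrow> card {l\<in>L. p \<in> l \<and> q \<in> l} \<le> 1)"

definition configuration :: "'p set \<Rightarrow> 'p set set \<Rightarrow> nat \<Rightarrow> nat \<Rightarrow> nat \<Rightarrow> nat \<Rightarrow> bool" where
  "configuration P L v r b k \<longleftrightarrow>
     partial_linear_space P L \<and> finite P \<and> finite L \<and>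
     card P = v \<and> card L = b \<and>
     (\<forall>p\<in>P. card {l\<in>L. p \<in> l} = r) \<and>
     (\<forall>l\<in>L. card l = k)"

definition subspace :: "'p set \<Rightarrow> 'p set set \<Rightarrow> 'p set \<Rightarrow> bool" where
  "subspace P L S \<longleftrightarrow> S \<subseteq> P \<and> (\<forall>l\<in>L. card (l \<inter> S) \<ge> 2 \<longrightarrow> l \<subseteq> S)"

definition hyperplane :: "'p set \<Rightarrow> 'p set set \<Rightarrow> 'p set \<Rightarrow> bool" where
  "hyperplane P L H \<longleftrightarrow> subspace P L H \<and> H \<noteq> P \<and> (\<forall>l\<in>L. l \<inter> H \<noteq> {})"

definition M_lines :: "'a \<Rightarrow> 'a set \<Rightarrow> 'a set set set \<Rightarrow> 'a set set set" where
  "M_lines z X LV = LV \<union> {{{z, x}, {z, y}, {x, y}} | x y. x \<in> X \<and> y \<in> X \<and> x \<noteq> y}"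

end

theory Submission
  imports Defs
begin

text \<open>For distinct \<open>a, b \<in> X\<close> the triangle \<open>{{0,a},{0,b},{a,b}}\<close> is a line of \<open>\<MM>\<close>, so a subspace
  containing \<open>{a,b}\<close> and \<open>{0,a}\<close> also contains \<open>{0,b}\<close>. Applied along the edge \<open>{x,w}\<close> this
  puts \<open>{0,x}\<close> into \<open>H\<close>, and then along each edge \<open>{x,y}\<close> it puts \<open>{0,y}\<close> into \<open>H\<close>.\<close>

lemma subspace_line_subset:
  assumes "subspace P L S" "l \<in> L" "finite l"
    and "p \<in> l" "q \<in> l" "p \<in> S" "q \<in> S" "p \<noteq> q"
  shows "l \<subseteq> S"
proof -
  have "card {p, q} \<le> card (l \<inter> S)"
    using assms(3-7) by (intro card_mono) auto
  with assms show ?thesis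
    unfolding subspace_def by auto
qed

lemma subspace_M_lines_transfer:
  assumes S: "subspace (P2 (insert z X)) (M_lines z X LV) S"
    and "z \<notin> X" "a \<in> X" "b \<in> X" "a \<noteq> b"
    and "{a, b} \<in> S" "{z, a} \<in> S"
  shows "{z, b} \<in> S"
proof -
  have "{{z, a}, {z, b}, {a, b}} \<in> M_lines z X LV"
    unfolding M_lines_def using assms(3-5) by blast
  moreover have "{z, a} \<noteq> {a, b}"
    using assms(2-4) by (auto simp: doubleton_eq_iff)
  ultimately show ?thesis
    using subspace_line_subset[OF S _ _ _ _ assms(7,6)] assms(6,7) by blast
qed

theorem lemma3p2:
  fixes X :: "'a set" and z :: 'a and n :: nat
    and LV :: "'a set set set" and H :: "'a set set" and x :: 'a
  assumes "finite X" and "card X = n" and "z \<notin> X"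
    and "configuration (P2 X) LV (n choose 2) (n - 2) (n choose 3) 3"
    and "hyperplane (P2 (insert z X)) (M_lines z X LV) H"
    and "x \<in> X"
    and "\<exists>w\<in>{y\<in>X. y = x \<or> (y \<noteq> x \<and> {x, y} \<in> H)}. {z, w} \<in> H"
  shows "\<forall>y\<in>{y\<in>X. y = x \<or> (y \<noteq> x \<and> {x, y} \<in> H)}. {z, y} \<in> H"
proof -
  have S: "subspace (P2 (insert z X)) (M_lines z X LV) H"
    using assms(5) unfolding hyperplane_def by blast
  note transfer = subspace_M_lines_transfer[OF S \<open>z \<notin> X\<close>]
  obtain w where w: "w \<in> X" "w = x \<or> {x, w} \<in> H" "{z, w} \<in> H"
    using assms(7) by blast
  have zx: "{z, x} \<in> H"
  proof (cases "w = x")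
    case False
    with w transfer[of w x] \<open>x \<in> X\<close> show ?thesis by (simp add: insert_commute)
  qed (use w in simp)
  show ?thesis
    using zx transfer[of x] \<open>x \<in> X\<close> by auto
qed

end
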